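(* Let $(G,\cdot)$ be an abelian group of order $n\ge 2$ which is generated by $r$ elements, let $S$ be a set with $|S|=n$, and let $\mathcal{X}_G$ be the set of all binary operations $*:S\times S\to S$ such that $(S,* )$ is isomorphic to $(G,\cdot)$. Then any query-algorithm with respect to $\mathcal{X}_G$ which solves product-recovering satisfies, for $*$ uniformly distributed on $\mathcal{X}_G$, \[E(N)\ \ge\ n-\frac{n}{\ln n}+\frac12-r.\]
   Context: Let $S$ be a finite set and $\mathcal{X}$ a set of binary operations $*:S\times S\to S$. A query-algorithm with respect to $\mathcal{X}$ is a rooted tree $T$ in which every non-leaf node $v$ is labeled by a pair $(x_v,y_v)\in S^2$ (the query "$x_v*y_v$"), leaves are unlabeled, and every edge from $v$ to a child is labeled by an element of $S$ (a possible answer), distinct edges leaving the same node having distinct labels. It is required that for every $*\in\mathcal{X}$ there is a path $(v_0,\dots,v_k)$ from the root $v_0$ to a leaf $v_k$ such that for each $0\le i<k$ the edge $(v_i,v_{i+1})$ is labeled $x_{v_i}*y_{v_i}$. This leaf is uniquely determined and is denoted $L( * )$, giving a map $L:\mathcal{X}\to\{\text{leaves of }T\}$. The query-algorithm solves product-recovering if $L$ is a bijection. The number of queries used on $*$ is the depth $N( * )$ of $L( * )$; $E(N)$ denotes its expectation when $*$ is uniformly distributed on $\mathcal{X}$. *)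

theory Defs
  imports Complex_Main "HOL-Algebra.Algebra"
begin

text \<open>Query-algorithms over a finite ground type 'a (playing the role of S).
  A node asks the query x * y; its children are given by a partial map from
  answers to subtrees (distinct edges have distinct labels automatically).\<close>

datatype 'a qtree = Leaf | Node 'a 'a "'a \<Rightarrow> 'a qtree option"

text \<open>Leaves of a tree, identified by the sequence of edge labels from the root.\<close>
inductive leaf_path :: "'a qtree \<Rightarrow> 'a list \<Rightarrow> bool" where
  "leaf_path Leaf []"
| "ch a = Some t \<Longrightarrow> leaf_path t p \<Longrightarrow> leaf_path (Node u v ch) (a # p)"

inductive follows :: "'a qtree \<Rightarrow> ('a \<Rightarrow> 'a \<Rightarrow> 'a) \<Rightarrow> 'a list \<Rightarrow> bool" where
  "follows Leaf g []"
| "ch (g u v) = Some t \<Longrightarrow> follows t g p \<Longrightarrow> follows (Node u v ch) g (g u v # p)"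

definition query_algorithm :: "'a qtree \<Rightarrow> ('a \<Rightarrow> 'a \<Rightarrow> 'a) set \<Rightarrow> bool" where
  "query_algorithm Tr Ops \<longleftrightarrow> (\<forall>f\<in>Ops. \<exists>p. follows Tr f p)"

definition leafL :: "'a qtree \<Rightarrow> ('a \<Rightarrow> 'a \<Rightarrow> 'a) \<Rightarrow> 'a list" where
  "leafL Tr f = (THE p. follows Tr f p)"

definition solves_product_recovering :: "'a qtree \<Rightarrow> ('a \<Rightarrow> 'a \<Rightarrow> 'a) set \<Rightarrow> bool" where
  "solves_product_recovering Tr Ops \<longleftrightarrow>
     query_algorithm Tr Ops \<and> bij_betw (leafL Tr) Ops {p. leaf_path Tr p}"

definition num_queries :: "'a qtree \<Rightarrow> ('a \<Rightarrow> 'a \<Rightarrow> 'a) \<Rightarrow> nat" where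
  "num_queries Tr f = length (leafL Tr f)"

definition expected_queries :: "'a qtree \<Rightarrow> ('a \<Rightarrow> 'a \<Rightarrow> 'a) set \<Rightarrow> real" where
  "expected_queries Tr Ops = (\<Sum>f\<in>Ops. real (num_queries Tr f)) / real (card Ops)"

definition iso_ops :: "('b, 'c) monoid_scheme \<Rightarrow> ('a \<Rightarrow> 'a \<Rightarrow> 'a) set" where
  "iso_ops G = {f. \<exists>\<phi>. bij_betw \<phi> (UNIV :: 'a set) (carrier G) \<and>
                      (\<forall>x y. \<phi> (f x y) = \<phi> x \<otimes>\<^bsub>G\<^esub> \<phi> y)}"

end

theory Submission
  imports Defs "HOL-Combinatorics.Permutations" "HOL-Analysis.Convex"
begin

(* The proof is information-theoretic and has three ingredients.
   (1) Kraft's inequality: the leaves of a query tree over an n-element alphabet satisfy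
       sum over leaves of n^(-depth) <= 1.  Together with Jensen's inequality for exp this
       gives the coding bound: any injective labelling of a finite set A by leaves has
       average depth at least log_n |A|.
   (2) Counting: an isomorphism from (S,* ) onto G is determined by * together with the
       images of r generators of G, so the n! bijections S -> G inject into
       iso_ops G x G^r, whence n! <= |iso_ops G| * n^r.
   (3) A Stirling-type estimate ln n! >= (n + 1/2) ln n - n, proved by induction from a
       cubic upper bound for ln (1 + x).
   The last section combines them: E(N) >= ln |iso_ops G| / ln n >= (ln n! - r ln n) / ln n
   >= n + 1/2 - n / ln n - r. *)

section \<open>A Stirling-type lower bound for the factorial\<close>

lemma ln_add_one_le_cubic:
  fixes x :: real
  assumes "0 \<le> x"
  shows "ln (1 + x) \<le> x - x^2/2 + x^3/3"
proof -
  let ?F = "\<lambda>x::real. x - x^2/2 + x^3/3 - ln (1 + x)"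
  have "?F 0 \<le> ?F x"
  proof (rule DERIV_nonneg_imp_nondecreasing[OF assms])
    fix y :: real
    assume y: "0 \<le> y" "y \<le> x"
    have "DERIV ?F y :> 1 - y + y^2 - 1/(1 + y)"
      using y by (auto intro!: derivative_eq_intros simp: field_simps power2_eq_square)
    moreover have "1 - y + y^2 - 1/(1 + y) = y^3/(1 + y)"
      using y by (simp add: field_simps power2_eq_square power3_eq_cube)
    ultimately show "\<exists>d. DERIV ?F y :> d \<and> 0 \<le> d"
      using y by auto
  qed
  then show ?thesis by simp
qed

text \<open>After the cubic bound for ln (1 + 1/x) this reduces to the
  polynomial inequality (5x + 2)(x - 1) \<ge> 0.\<close>
lemma stirling_increment:
  fixes x :: real
  assumes x: "1 \<le> x"
  shows "(x + 1/2) * (ln (x + 1) - ln x) \<le> 1 + 1/(2*x) - 1/(2*(x + 1))"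
proof -
  have "0 \<le> 2*x*((5*x + 2) * (x - 1))"
    using x by simp
  then have "(x + 2) * (2*x*(x + 1)) \<le> 1 * (12*x^3)"
    by (simp add: algebra_simps power3_eq_cube)
  moreover have "0 < 12*x^3" "0 < 2*x*(x + 1)"
    using x by simp_all
  ultimately have error_term: "(x + 2) / (12*x^3) \<le> 1 / (2*x*(x + 1))"
    by (simp only: frac_le_eq) (simp add: divide_le_eq)
  have "1 + 1/x = (x + 1)/x"
    using x by (simp add: field_simps)
  then have "ln (x + 1) - ln x = ln (1 + 1/x)"
    using x by (simp add: ln_div)
  also have "\<dots> \<le> 1/x - (1/x)^2/2 + (1/x)^3/3"
    using x by (intro ln_add_one_le_cubic) simp
  finally have "(x + 1/2) * (ln (x + 1) - ln x) \<le> (x + 1/2) * (1/x - (1/x)^2/2 + (1/x)^3/3)"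
    using x by (intro mult_left_mono) auto
  also have "\<dots> = 1 + (x + 2) / (12*x^3)"
    using x by (simp add: field_simps power2_eq_square power3_eq_cube)
  also have "\<dots> \<le> 1 + 1 / (2*x*(x + 1))"
    using error_term by simp
  also have "\<dots> = 1 + 1/(2*x) - 1/(2*(x + 1))"
  proof -
    have "x \<noteq> 0" "x + 1 \<noteq> 0" using x by simp_all
    then show ?thesis by (simp add: divide_simps) (simp add: algebra_simps)
  qed
  finally show ?thesis .
qed

text \<open>The lower half of Stirling's formula, with the error term 1/(2n) that makes the
  induction go through.\<close>
lemma ln_fact_lower_bound:
  assumes "1 \<le> n"
  shows "(real n + 1/2) * ln (real n) - real n + 1/(2*real n) \<le> ln (fact n :: real)"
  using assms
proof (induction n rule: nat_induct_at_least)
  case base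
  then show ?case by simp
next
  case (Suc n)
  have "ln (fact (Suc n) :: real) = ln (real n + 1) + ln (fact n)"
    by (simp add: ln_mult add.commute)
  then show ?case
    using Suc.IH stirling_increment[of "real n"] Suc.hyps by (simp add: algebra_simps)
qed

section \<open>Kraft's inequality and the coding bound\<close>

lemma leaf_path_Leaf_iff: "leaf_path Leaf p \<longleftrightarrow> p = []"
  by (auto elim: leaf_path.cases intro: leaf_path.intros)

lemma leaf_path_Node_iff:
  "leaf_path (Node u v ch) p \<longleftrightarrow> (\<exists>a q t. p = a # q \<and> ch a = Some t \<and> leaf_path t q)"
  by (auto elim: leaf_path.cases intro: leaf_path.intros)

lemma kraft_inequality:
  fixes t :: "('a::finite) qtree"
  defines "n \<equiv> card (UNIV :: 'a set)"
  shows "finite {p. leaf_path t p} \<and> (\<Sum>p | leaf_path t p. (1/real n)^length p) \<le> 1"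
proof (induction t)
  case Leaf
  then show ?case by (simp add: leaf_path_Leaf_iff)
next
  case (Node u v ch)
  define S where "S a = (case ch a of None \<Rightarrow> {} | Some t \<Rightarrow> {p. leaf_path t p})" for a
  have S_finite: "finite (S a)" and S_sum: "(\<Sum>q\<in>S a. (1/real n)^length q) \<le> 1" for a
    using Node[of "ch a"] by (auto simp: S_def split: option.splits)
  have leaves: "{p. leaf_path (Node u v ch) p} = (\<lambda>(a, q). a # q) ` Sigma UNIV S"
    by (auto simp: leaf_path_Node_iff S_def split: option.splits)
  have inj: "inj_on (\<lambda>(a, q). a # q) (Sigma UNIV S)"
    by (auto simp: inj_on_def)
  have n_pos: "real n > 0"
    by (simp add: n_def card_gt_0_iff)
  have "(\<Sum>p | leaf_path (Node u v ch) p. (1/real n)^length p)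
        = (\<Sum>(a, q)\<in>Sigma UNIV S. (1/real n) * (1/real n)^length q)"
    unfolding leaves by (subst sum.reindex[OF inj]) (simp add: case_prod_unfold)
  also have "\<dots> = (\<Sum>a\<in>UNIV. (1/real n) * (\<Sum>q\<in>S a. (1/real n)^length q))"
    by (subst sum.Sigma[symmetric]) (auto simp: S_finite sum_distrib_left)
  also have "\<dots> \<le> (\<Sum>a\<in>(UNIV::'a set). 1/real n)"
    using S_sum n_pos by (intro sum_mono) (simp add: divide_right_mono)
  also have "\<dots> = 1"
    using n_pos by (simp add: n_def)
  finally show ?case
    using leaves S_finite by simp
qed

text \<open>The coding bound: if the numbers d(x), x in A, satisfy Kraft's inequality for base
  q > 1, then their average is at least log_q |A|.  This is Jensen's inequality for exp.\<close>
lemma average_depth_lower_bound: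
  fixes A :: "'x set" and d :: "'x \<Rightarrow> nat" and q :: real
  assumes fin: "finite A" and ne: "A \<noteq> {}" and q: "1 < q"
    and kraft: "(\<Sum>x\<in>A. (1/q)^d x) \<le> 1"
  shows "ln (real (card A)) / ln q \<le> (\<Sum>x\<in>A. real (d x)) / real (card A)"
proof -
  define M where "M = real (card A)"
  define E where "E = (\<Sum>x\<in>A. real (d x)) / M"
  have M: "0 < M" using fin ne by (simp add: M_def card_gt_0_iff)
  have L: "0 < ln q" using q by simp
  have power_as_exp: "(1/q)^k = exp (- ln q * real k)" for k
    using q by (simp add: exp_of_nat2_mult exp_minus power_one_over inverse_eq_divide)
  have mean: "(\<Sum>x\<in>A. (1/M) *\<^sub>R (- ln q * real (d x))) = - ln q * E"
    by (simp add: E_def sum_negf sum_distrib_left[symmetric] sum_divide_distrib[symmetric])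
  have "exp (\<Sum>x\<in>A. (1/M) *\<^sub>R (- ln q * real (d x))) \<le> (\<Sum>x\<in>A. (1/M) * exp (- ln q * real (d x)))"
    using M fin ne by (intro convex_on_sum[OF _ _ exp_convex]) (auto simp: M_def)
  then have "exp (- ln q * E) \<le> (1/M) * (\<Sum>x\<in>A. (1/q)^d x)"
    by (simp only: mean power_as_exp sum_distrib_left)
  also have "\<dots> \<le> 1/M"
    using kraft M by (simp add: divide_right_mono)
  finally have "ln (exp (- ln q * E)) \<le> ln (1/M)"
    using M by (subst ln_le_cancel_iff) auto
  then have "- ln q * E \<le> - ln M"
    using M by (simp add: ln_div)
  then show ?thesis
    using L by (simp add: E_def M_def divide_le_eq mult.commute)
qed

section \<open>Counting the operations isomorphic to a group\<close>

definition is_iso :: "('b, 'c) monoid_scheme \<Rightarrow> ('a \<Rightarrow> 'a \<Rightarrow> 'a) \<Rightarrow> ('a \<Rightarrow> 'b) \<Rightarrow> bool" where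
  "is_iso G f \<psi> \<longleftrightarrow> bij_betw \<psi> UNIV (carrier G) \<and> (\<forall>x y. \<psi> (f x y) = \<psi> x \<otimes>\<^bsub>G\<^esub> \<psi> y)"

lemma iso_ops_iff: "f \<in> iso_ops G \<longleftrightarrow> (\<exists>\<psi>. is_iso G f \<psi>)"
  by (simp add: iso_ops_def is_iso_def)

definition transport_op :: "('b, 'c) monoid_scheme \<Rightarrow> ('a \<Rightarrow> 'b) \<Rightarrow> 'a \<Rightarrow> 'a \<Rightarrow> 'a" where
  "transport_op G \<psi> = (\<lambda>x y. inv_into UNIV \<psi> (\<psi> x \<otimes>\<^bsub>G\<^esub> \<psi> y))"

lemma (in monoid) is_iso_transport_op:
  assumes "bij_betw \<psi> UNIV (carrier G)"
  shows "is_iso G (transport_op G \<psi>) \<psi>"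
proof -
  have "\<psi> x \<otimes> \<psi> y \<in> carrier G" for x y
    using assms by (auto simp: bij_betw_def)
  then show ?thesis
    using assms by (simp add: is_iso_def transport_op_def bij_betw_inv_into_right)
qed

lemma is_iso_comp_inv_hom:
  assumes \<psi>: "is_iso G f \<psi>" and \<beta>: "is_iso G f \<beta>"
  shows "\<psi> \<circ> inv_into UNIV \<beta> \<in> hom G G"
proof (rule homI)
  have \<beta>_inv: "\<beta> (inv_into UNIV \<beta> g) = g" if "g \<in> carrier G" for g
    using \<beta> that unfolding is_iso_def by (blast intro: bij_betw_inv_into_right)
  show "(\<psi> \<circ> inv_into UNIV \<beta>) g \<in> carrier G" for g
    using \<psi> by (auto simp: is_iso_def bij_betw_def)
  fix g h
  assume gh: "g \<in> carrier G" "h \<in> carrier G"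
  have "\<beta> (f (inv_into UNIV \<beta> g) (inv_into UNIV \<beta> h)) = g \<otimes>\<^bsub>G\<^esub> h"
    using \<beta> gh \<beta>_inv by (simp add: is_iso_def)
  then have "inv_into UNIV \<beta> (g \<otimes>\<^bsub>G\<^esub> h) = f (inv_into UNIV \<beta> g) (inv_into UNIV \<beta> h)"
    using \<beta> by (metis is_iso_def bij_betw_def inv_into_f_f UNIV_I)
  then show "(\<psi> \<circ> inv_into UNIV \<beta>) (g \<otimes>\<^bsub>G\<^esub> h)
             = (\<psi> \<circ> inv_into UNIV \<beta>) g \<otimes>\<^bsub>G\<^esub> (\<psi> \<circ> inv_into UNIV \<beta>) h"
    using \<psi> by (simp add: is_iso_def)
qed

lemma (in group) hom_eq_on_generate:
  assumes "group K" and hom: "\<alpha> \<in> hom G K" "\<alpha>' \<in> hom G K"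
    and H: "H \<subseteq> carrier G" and agree: "\<forall>g\<in>H. \<alpha> g = \<alpha>' g"
  shows "\<forall>g\<in>generate G H. \<alpha> g = \<alpha>' g"
proof -
  interpret \<alpha>: group_hom G K \<alpha> using assms by (simp add: group_hom_def group_hom_axioms_def)
  interpret \<alpha>': group_hom G K \<alpha>' using assms by (simp add: group_hom_def group_hom_axioms_def)
  have "subgroup {g \<in> carrier G. \<alpha> g = \<alpha>' g} G"
    by (rule subgroupI) auto
  then have "generate G H \<subseteq> {g \<in> carrier G. \<alpha> g = \<alpha>' g}"
    using H agree by (intro generate_subgroup_incl) auto
  then show ?thesis by blast
qed

lemma (in group) iso_determined_by_generators:
  assumes \<beta>: "is_iso G f \<beta>" and \<psi>: "is_iso G f \<psi>" and \<psi>': "is_iso G f \<psi>'"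
    and H: "H \<subseteq> carrier G" and gen: "generate G H = carrier G"
    and agree: "\<forall>g\<in>H. \<psi> (inv_into UNIV \<beta> g) = \<psi>' (inv_into UNIV \<beta> g)"
  shows "\<psi> = \<psi>'"
proof
  fix x
  have "\<forall>g\<in>carrier G. (\<psi> \<circ> inv_into UNIV \<beta>) g = (\<psi>' \<circ> inv_into UNIV \<beta>) g"
    using hom_eq_on_generate[OF is_group is_iso_comp_inv_hom[OF \<psi> \<beta>] is_iso_comp_inv_hom[OF \<psi>' \<beta>] H]
      agree gen by simp
  moreover have "\<beta> x \<in> carrier G" and "inv_into UNIV \<beta> (\<beta> x) = x"
    using \<beta> by (auto simp: is_iso_def bij_betw_def)
  ultimately show "\<psi> x = \<psi>' x" by (metis comp_apply)
qed

text \<open>Encoding of a bijection \<open>\<psi>\<close> : S \<rightarrow> G by the operation f it induces together with the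
  images of the generators gs under \<open>\<psi> \<circ> \<beta>\<inverse>\<close>, where \<open>\<beta>\<close> is a canonical isomorphism for f.\<close>
definition iso_code :: "('b, 'c) monoid_scheme \<Rightarrow> 'b list \<Rightarrow> ('a \<Rightarrow> 'b) \<Rightarrow> ('a \<Rightarrow> 'a \<Rightarrow> 'a) \<times> 'b list" where
  "iso_code G gs \<psi> =
     (let f = transport_op G \<psi> in (f, map (\<psi> \<circ> inv_into UNIV (SOME \<beta>. is_iso G f \<beta>)) gs))"

lemma (in monoid) iso_code_mem:
  assumes "bij_betw \<psi> UNIV (carrier G)"
  shows "iso_code G gs \<psi> \<in> iso_ops G \<times> {xs. set xs \<subseteq> carrier G \<and> length xs = length gs}"
proof -
  have "\<psi> x \<in> carrier G" for x
    using assms by (auto simp: bij_betw_def)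
  then show ?thesis
    using is_iso_transport_op[OF assms] by (auto simp: iso_code_def Let_def iso_ops_iff)
qed

text \<open>By rigidity, the encoding is injective when gs generates G.\<close>
lemma (in group) inj_on_iso_code:
  assumes gs: "set gs \<subseteq> carrier G" and gen: "generate G (set gs) = carrier G"
  shows "inj_on (iso_code G gs) {\<psi>. bij_betw \<psi> UNIV (carrier G)}"
proof (rule inj_onI)
  fix \<psi> \<psi>'
  assume "\<psi> \<in> {\<psi>. bij_betw \<psi> UNIV (carrier G)}" "\<psi>' \<in> {\<psi>. bij_betw \<psi> UNIV (carrier G)}"
    and eq: "iso_code G gs \<psi> = iso_code G gs \<psi>'"
  then have bij: "bij_betw \<psi> UNIV (carrier G)" "bij_betw \<psi>' UNIV (carrier G)" by simp_all
  define f where "f = transport_op G \<psi>"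
  have f': "transport_op G \<psi>' = f"
    using eq by (simp add: f_def iso_code_def Let_def)
  have iso: "is_iso G f \<psi>" and iso': "is_iso G f \<psi>'"
    using is_iso_transport_op[OF bij(1)] is_iso_transport_op[OF bij(2)] f' by (simp_all add: f_def)
  have ref: "is_iso G f (SOME \<beta>. is_iso G f \<beta>)"
    using iso by (metis someI)
  have "\<forall>g\<in>set gs. \<psi> (inv_into UNIV (SOME \<beta>. is_iso G f \<beta>) g) = \<psi>' (inv_into UNIV (SOME \<beta>. is_iso G f \<beta>) g)"
    using eq f' by (simp add: iso_code_def Let_def f_def[symmetric])
  then show "\<psi> = \<psi>'"
    by (rule iso_determined_by_generators[OF ref iso iso' gs gen])
qed

text \<open>The n! bijections S \<rightarrow> G (obtained from the permutations of S) inject into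
  iso_ops G \<times> G^r via the encoding above.\<close>
lemma (in group) card_iso_ops_lower_bound:
  assumes fin: "finite (carrier G)"
    and card: "card (UNIV :: ('s::finite) set) = card (carrier G)"
    and gs: "set gs \<subseteq> carrier G" and gen: "generate G (set gs) = carrier G"
  shows "fact (card (carrier G)) \<le> card (iso_ops G :: ('s \<Rightarrow> 's \<Rightarrow> 's) set) * card (carrier G) ^ length gs"
proof -
  obtain \<phi> :: "'s \<Rightarrow> 'a" where \<phi>: "bij_betw \<phi> UNIV (carrier G)"
    using finite_same_card_bij[OF finite_UNIV fin card] by blast
  define P where "P = {\<sigma>::'s \<Rightarrow> 's. \<sigma> permutes UNIV}"
  define Gs where "Gs = {xs. set xs \<subseteq> carrier G \<and> length xs = length gs}"
  have bij: "(\<circ>) \<phi> ` P \<subseteq> {\<psi>. bij_betw \<psi> UNIV (carrier G)}"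
    using \<phi> by (auto simp: P_def intro: bij_betw_trans permutes_imp_bij)
  have "inj \<phi>"
    using \<phi> by (simp add: bij_betw_def)
  then have "inj_on ((\<circ>) \<phi>) P"
    by (intro inj_onI) (simp add: fun_eq_iff inj_eq)
  then have inj: "inj_on (iso_code G gs \<circ> (\<circ>) \<phi>) P"
    by (rule comp_inj_on[OF _ inj_on_subset[OF inj_on_iso_code[OF gs gen] bij]])
  have image: "(iso_code G gs \<circ> (\<circ>) \<phi>) ` P \<subseteq> (iso_ops G :: ('s \<Rightarrow> 's \<Rightarrow> 's) set) \<times> Gs"
  proof (rule image_subsetI)
    fix \<sigma> assume "\<sigma> \<in> P"
    then have "bij_betw (\<phi> \<circ> \<sigma>) UNIV (carrier G)"
      using bij by blast
    then show "(iso_code G gs \<circ> (\<circ>) \<phi>) \<sigma> \<in> iso_ops G \<times> Gs"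
      unfolding Gs_def by (simp add: iso_code_mem)
  qed
  have "fact (card (carrier G)) = card P"
    using card_permutations[OF card finite_UNIV] by (simp add: P_def)
  also have "\<dots> \<le> card ((iso_ops G :: ('s \<Rightarrow> 's \<Rightarrow> 's) set) \<times> Gs)"
    using card_inj_on_le[OF inj image] fin by (simp add: Gs_def finite_lists_length_eq)
  also have "\<dots> = card (iso_ops G :: ('s \<Rightarrow> 's \<Rightarrow> 's) set) * card (carrier G) ^ length gs"
    by (simp add: card_cartesian_product Gs_def card_lists_length_eq fin)
  finally show ?thesis .
qed

lemma expected_queries_ge_log_card:
  fixes T :: "('a::finite) qtree" and Ops :: "('a \<Rightarrow> 'a \<Rightarrow> 'a) set"
  assumes n: "2 \<le> card (UNIV :: 'a set)"
    and solves: "solves_product_recovering T Ops" and ne: "Ops \<noteq> {}"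
  shows "ln (real (card Ops)) / ln (real (card (UNIV :: 'a set))) \<le> expected_queries T Ops"
proof -
  define q where "q = real (card (UNIV :: 'a set))"
  have leaves: "bij_betw (leafL T) Ops {p. leaf_path T p}"
    using solves by (simp add: solves_product_recovering_def)
  have "(\<Sum>f\<in>Ops. (1/q)^num_queries T f) = (\<Sum>p | leaf_path T p. (1/q)^length p)"
    unfolding num_queries_def by (rule sum.reindex_bij_betw[OF leaves])
  also have "\<dots> \<le> 1"
    using kraft_inequality[where t=T] by (simp add: q_def)
  finally show ?thesis
    using average_depth_lower_bound[OF finite ne, of q] n
    by (simp add: expected_queries_def q_def)
qed

lemma log_count_lower_bound:
  fixes n M r :: nat
  assumes n: "2 \<le> n" and count: "fact n \<le> M * n ^ r"
  shows "real n - real n / ln (real n) + 1/2 - real r \<le> ln (real M) / ln (real n)"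
proof -
  define L where "L = ln (real n)"
  have L: "0 < L" using n by (simp add: L_def)
  have "M \<noteq> 0"
    using count by (metis mult_0 not_less_zero fact_gt_zero less_le_trans)
  have "0 \<le> 1/(2*real n)" by simp
  then have "(real n + 1/2) * L - real n \<le> ln (fact n :: real)"
    using ln_fact_lower_bound[of n] n unfolding L_def by linarith
  also have "\<dots> \<le> ln (real M * real n ^ r)"
  proof -
    have "(fact n :: real) \<le> real (M * n ^ r)"
      using count by (metis of_nat_fact of_nat_le_iff)
    then show ?thesis by (simp add: ln_mono)
  qed
  also have "\<dots> = ln (real M) + real r * L"
    using \<open>M \<noteq> 0\<close> n by (simp add: L_def ln_mult ln_realpow)
  finally have "((real n + 1/2) * L - real n - real r * L) / L \<le> ln (real M) / L"
    using L by (intro divide_right_mono) auto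
  moreover have "((real n + 1/2) * L - real n - real r * L) / L = real n - real n / L + 1/2 - real r"
    using L by (simp add: field_simps)
  ultimately show ?thesis
    by (simp add: L_def)
qed

theorem mainTheorem4:
  fixes G :: "('b, 'c) monoid_scheme"
    and T :: "('a::finite) qtree"
    and n r :: nat
  assumes "comm_group G"
    and "finite (carrier G)"
    and "order G = n"
    and "n \<ge> 2"
    and "\<exists>gs. length gs = r \<and> set gs \<subseteq> carrier G \<and> generate G (set gs) = carrier G"
    and "card (UNIV :: 'a set) = n"
    and "solves_product_recovering T (iso_ops G :: ('a \<Rightarrow> 'a \<Rightarrow> 'a) set)"
  shows "expected_queries T (iso_ops G) \<ge> real n - real n / ln (real n) + 1/2 - real r"
proof -
  define M where "M = card (iso_ops G :: ('a \<Rightarrow> 'a \<Rightarrow> 'a) set)"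
  obtain gs where gs: "length gs = r" "set gs \<subseteq> carrier G" "generate G (set gs) = carrier G"
    using assms(5) by blast
  have "card (carrier G) = n"
    using assms(3) by (simp add: order_def)
  then have count: "fact n \<le> M * n ^ r"
    using group.card_iso_ops_lower_bound[OF comm_group.axioms(2)[OF assms(1)] assms(2) _ gs(2,3), where 's='a]
      assms(6) gs(1) by (simp add: M_def)
  then have "(iso_ops G :: ('a \<Rightarrow> 'a \<Rightarrow> 'a) set) \<noteq> {}"
    by (auto simp: M_def)
  then have "ln (real M) / ln (real n) \<le> expected_queries T (iso_ops G)"
    using expected_queries_ge_log_card[OF _ assms(7)] assms(4,6) by (simp add: M_def)
  then show ?thesis
    using log_count_lower_bound[OF assms(4) count] by linarith
qed

end
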